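(* Let $D$ be a connected locally semicomplete digraph in which no inclusion-wise maximal weak hub is mixed, and let $X,Y$ be two distinct inclusion-wise maximal weak hubs. Then exactly one of the following holds: there is no arc between $X$ and $Y$; or for all $x\in X,y\in Y$, $xy$ is an arc and $yx$ is not; or for all $x\in X,y\in Y$, $yx$ is an arc and $xy$ is not.
   Context: Digraphs are finite, no loops, no parallel arcs; digons allowed. $x^+$, $x^-$ are out- and in-neighbourhoods. Semicomplete: any two distinct vertices are joined by at least one arc; locally semicomplete: every $x^+$ and every $x^-$ induces a semicomplete digraph. A weak hub is a set $X\subseteq V(D)$ with $D[X]$ strongly connected such that some vertex $x$ satisfies $X\subseteq x^-\setminus x^+$ or $X\subseteq x^+\setminus x^-$. A weak hub $X$ is mixed if there exist $x\notin X$ and $u,v\in X$ such that $xu$ and $vx$ are arcs. *)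

theory Defs
  imports Main
begin

text \<open>A digraph is given by a finite vertex set V and an arc set A \<subseteq> V \<times> V
  without loops (parallel arcs are impossible since A is a set; digons allowed).\<close>

definition digraph :: "'a set \<Rightarrow> ('a \<times> 'a) set \<Rightarrow> bool" where
  "digraph V A \<longleftrightarrow> finite V \<and> A \<subseteq> V \<times> V \<and> (\<forall>x. (x, x) \<notin> A)"

definition out_nbhd :: "('a \<times> 'a) set \<Rightarrow> 'a \<Rightarrow> 'a set" where
  "out_nbhd A x = {y. (x, y) \<in> A}"

definition in_nbhd :: "('a \<times> 'a) set \<Rightarrow> 'a \<Rightarrow> 'a set" where
  "in_nbhd A x = {y. (y, x) \<in> A}"

definition semicomplete_on :: "('a \<times> 'a) set \<Rightarrow> 'a set \<Rightarrow> bool" where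
  "semicomplete_on A S \<longleftrightarrow> (\<forall>u\<in>S. \<forall>v\<in>S. u \<noteq> v \<longrightarrow> (u, v) \<in> A \<or> (v, u) \<in> A)"

definition locally_semicomplete :: "'a set \<Rightarrow> ('a \<times> 'a) set \<Rightarrow> bool" where
  "locally_semicomplete V A \<longleftrightarrow>
     (\<forall>x\<in>V. semicomplete_on A (out_nbhd A x) \<and> semicomplete_on A (in_nbhd A x))"

definition connected_digraph :: "'a set \<Rightarrow> ('a \<times> 'a) set \<Rightarrow> bool" where
  "connected_digraph V A \<longleftrightarrow> V \<noteq> {} \<and> (\<forall>u\<in>V. \<forall>v\<in>V. (u, v) \<in> (A \<union> A\<inverse>)\<^sup>*)"

definition strongly_connected_on :: "('a \<times> 'a) set \<Rightarrow> 'a set \<Rightarrow> bool" where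
  "strongly_connected_on A X \<longleftrightarrow> X \<noteq> {} \<and> (\<forall>u\<in>X. \<forall>v\<in>X. (u, v) \<in> (A \<inter> (X \<times> X))\<^sup>*)"

definition weak_hub :: "'a set \<Rightarrow> ('a \<times> 'a) set \<Rightarrow> 'a set \<Rightarrow> bool" where
  "weak_hub V A X \<longleftrightarrow> X \<subseteq> V \<and> strongly_connected_on A X \<and>
     (\<exists>x\<in>V. X \<subseteq> in_nbhd A x - out_nbhd A x \<or> X \<subseteq> out_nbhd A x - in_nbhd A x)"

definition maximal_weak_hub :: "'a set \<Rightarrow> ('a \<times> 'a) set \<Rightarrow> 'a set \<Rightarrow> bool" where
  "maximal_weak_hub V A X \<longleftrightarrow> weak_hub V A X \<and> (\<forall>Z. weak_hub V A Z \<and> X \<subseteq> Z \<longrightarrow> Z = X)"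

definition mixed :: "'a set \<Rightarrow> ('a \<times> 'a) set \<Rightarrow> 'a set \<Rightarrow> bool" where
  "mixed V A X \<longleftrightarrow> (\<exists>x\<in>V - X. \<exists>u\<in>X. \<exists>v\<in>X. (x, u) \<in> A \<and> (v, x) \<in> A)"

end

theory Submission
  imports Defs
begin

text \<open>Let D be locally semicomplete and X strongly connected and not mixed. If a vertex z
  outside X sends an arc into X, then no arc goes back from X to z, and z dominates all of X:
  pushing the arc along an arc (a, b) of D[X], both a and z lie in the in-neighbourhood of b,
  which is semicomplete, and the arc between them cannot point from a to z. Dually for a vertex
  receiving an arc from X. Two distinct maximal weak hubs cannot overlap: otherwise such a
  vertex of one hub outside the other would force all arcs between the two difference sets in a
  single direction, which contradicts strong connectivity of one of the hubs. For disjoint hubs,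
  a single arc between them therefore forces all arcs in its direction.\<close>

definition dominates :: "('a \<times> 'a) set \<Rightarrow> 'a set \<Rightarrow> 'a set \<Rightarrow> bool" where
  "dominates A S T \<longleftrightarrow> (\<forall>s\<in>S. \<forall>t\<in>T. (s, t) \<in> A \<and> (t, s) \<notin> A)"

lemma rtrancl_Int_exit_arc:
  assumes "(a, b) \<in> (A \<inter> Y \<times> Y)\<^sup>*" and "a \<in> S" and "b \<notin> S"
  obtains c d where "(c, d) \<in> A" "c \<in> S \<inter> Y" "d \<in> Y - S"
  using assms by (induction rule: rtrancl_induct) auto

lemma weak_hub_semicomplete:
  assumes "weak_hub V A Y" and "locally_semicomplete V A"
  shows "semicomplete_on A Y"
proof -
  obtain x where "x \<in> V" and "Y \<subseteq> in_nbhd A x \<or> Y \<subseteq> out_nbhd A x"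
    using assms(1) unfolding weak_hub_def by blast
  with assms(2) show ?thesis
    unfolding locally_semicomplete_def semicomplete_on_def by blast
qed

lemma arc_into_nonmixed_dominates:
  assumes AV: "A \<subseteq> V \<times> V" and ls: "locally_semicomplete V A"
    and sc: "strongly_connected_on A X" and nm: "\<not> mixed V A X"
    and "z \<notin> X" "u \<in> X" "(z, u) \<in> A"
  shows "dominates A {z} X"
proof -
  have no_back: "\<forall>v\<in>X. (v, z) \<notin> A"
    using nm assms(5-7) AV unfolding mixed_def by blast
  have "(z, v) \<in> A" if v: "v \<in> X" for v
  proof -
    have "(v, u) \<in> (A \<inter> X \<times> X)\<^sup>*" using sc v \<open>u \<in> X\<close> unfolding strongly_connected_on_def by blast
    then show ?thesis
    proof (induction rule: converse_rtrancl_induct)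
      case base
      show ?case using \<open>(z, u) \<in> A\<close> .
    next
      case (step a b)
      then have ab: "(a, b) \<in> A" "a \<in> X" by auto
      have "semicomplete_on A (in_nbhd A b)"
        using ls ab(1) AV unfolding locally_semicomplete_def by blast
      moreover have "a \<in> in_nbhd A b" "z \<in> in_nbhd A b"
        using ab(1) step.IH unfolding in_nbhd_def by auto
      moreover have "a \<noteq> z" using ab(2) \<open>z \<notin> X\<close> by blast
      ultimately show ?case using ab(2) no_back unfolding semicomplete_on_def by blast
    qed
  qed
  with no_back show ?thesis unfolding dominates_def by blast
qed

lemma arc_from_nonmixed_dominated:
  assumes AV: "A \<subseteq> V \<times> V" and ls: "locally_semicomplete V A"
    and sc: "strongly_connected_on A X" and nm: "\<not> mixed V A X"
    and "z \<notin> X" "u \<in> X" "(u, z) \<in> A"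
  shows "dominates A X {z}"
proof -
  have no_back: "\<forall>v\<in>X. (z, v) \<notin> A"
    using nm assms(5-7) AV unfolding mixed_def by blast
  have "(v, z) \<in> A" if v: "v \<in> X" for v
  proof -
    have "(u, v) \<in> (A \<inter> X \<times> X)\<^sup>*" using sc v \<open>u \<in> X\<close> unfolding strongly_connected_on_def by blast
    then show ?thesis
    proof (induction rule: rtrancl_induct)
      case base
      show ?case using \<open>(u, z) \<in> A\<close> .
    next
      case (step b a)
      then have ba: "(b, a) \<in> A" "a \<in> X" by auto
      have "semicomplete_on A (out_nbhd A b)"
        using ls ba(1) AV unfolding locally_semicomplete_def by blast
      moreover have "a \<in> out_nbhd A b" "z \<in> out_nbhd A b"
        using ba(1) step.IH unfolding out_nbhd_def by auto
      moreover have "a \<noteq> z" using ba(2) \<open>z \<notin> X\<close> by blast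
      ultimately show ?case using ba(2) no_back unfolding semicomplete_on_def by blast
    qed
  qed
  with no_back show ?thesis unfolding dominates_def by blast
qed

lemma nonmixed_overlapping_nested:
  assumes AV: "A \<subseteq> V \<times> V" and ls: "locally_semicomplete V A"
    and scX: "strongly_connected_on A X" and nmX: "\<not> mixed V A X"
    and scY: "strongly_connected_on A Y" and nmY: "\<not> mixed V A Y"
    and semY: "semicomplete_on A Y" and "X \<inter> Y \<noteq> {}"
  shows "X \<subseteq> Y \<or> Y \<subseteq> X"
proof (rule ccontr)
  assume "\<not> (X \<subseteq> Y \<or> Y \<subseteq> X)"
  then obtain x z where x: "x \<in> X - Y" and z: "z \<in> Y - X" by blast
  obtain w where w: "w \<in> X \<inter> Y" using \<open>X \<inter> Y \<noteq> {}\<close> by blast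
  have "(z, w) \<in> A \<or> (w, z) \<in> A" using semY z w unfolding semicomplete_on_def by auto
  then show False
  proof
    assume "(z, w) \<in> A"
    then have "(z, x) \<in> A"
      using arc_into_nonmixed_dominates[OF AV ls scX nmX] z w x unfolding dominates_def by blast
    then have "dominates A Y {x}"
      using arc_from_nonmixed_dominated[OF AV ls scY nmY] z x by blast
    then have no_arc: "(c, d) \<notin> A" if "c \<in> X" "d \<in> Y - X" for c d
      using arc_into_nonmixed_dominates[OF AV ls scX nmX] that x unfolding dominates_def by blast
    have "(w, z) \<in> (A \<inter> Y \<times> Y)\<^sup>*" using scY w z unfolding strongly_connected_on_def by blast
    with rtrancl_Int_exit_arc[of w z A Y X] show False using w z no_arc by blast
  next
    assume "(w, z) \<in> A"
    then have "dominates A X {z}"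
      using arc_from_nonmixed_dominated[OF AV ls scX nmX] z w by blast
    then have no_arc: "(c, d) \<notin> A" if "c \<in> Y" "d \<in> X - Y" for c d
      using arc_into_nonmixed_dominates[OF AV ls scY nmY] that z unfolding dominates_def by blast
    have "(w, x) \<in> (A \<inter> X \<times> X)\<^sup>*" using scX w x unfolding strongly_connected_on_def by blast
    with rtrancl_Int_exit_arc[of w x A X Y] show False using w x no_arc by blast
  qed
qed

lemma disjoint_nonmixed_trichotomy:
  assumes AV: "A \<subseteq> V \<times> V" and ls: "locally_semicomplete V A"
    and scX: "strongly_connected_on A X" and nmX: "\<not> mixed V A X"
    and scY: "strongly_connected_on A Y" and nmY: "\<not> mixed V A Y"
    and disj: "X \<inter> Y = {}"
  shows "(\<forall>x\<in>X. \<forall>y\<in>Y. (x, y) \<notin> A \<and> (y, x) \<notin> A) \<or> dominates A X Y \<or> dominates A Y X"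
proof -
  have "dominates A X Y" if xy: "x \<in> X" "y \<in> Y" "(x, y) \<in> A" for x y
  proof -
    have "y \<notin> X" using xy(2) disj by blast
    from arc_from_nonmixed_dominated[OF AV ls scX nmX this xy(1,3)]
    have "(x', y) \<in> A" if "x' \<in> X" for x' using that unfolding dominates_def by simp
    moreover have "x' \<notin> Y" if "x' \<in> X" for x' using that disj by blast
    ultimately have "dominates A {x'} Y" if "x' \<in> X" for x'
      using arc_into_nonmixed_dominates[OF AV ls scY nmY _ xy(2)] that by blast
    then show ?thesis unfolding dominates_def by blast
  qed
  moreover have "dominates A Y X" if xy: "x \<in> X" "y \<in> Y" "(y, x) \<in> A" for x y
  proof -
    have "y \<notin> X" using xy(2) disj by blast
    from arc_into_nonmixed_dominates[OF AV ls scX nmX this xy(1,3)]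
    have "(y, x') \<in> A" if "x' \<in> X" for x' using that unfolding dominates_def by simp
    moreover have "x' \<notin> Y" if "x' \<in> X" for x' using that disj by blast
    ultimately have "dominates A Y {x'}" if "x' \<in> X" for x'
      using arc_from_nonmixed_dominated[OF AV ls scY nmY _ xy(2)] that by blast
    then show ?thesis unfolding dominates_def by blast
  qed
  ultimately show ?thesis by blast
qed

theorem claim4p6:
  fixes V :: "'a set" and A :: "('a \<times> 'a) set" and X Y :: "'a set"
  assumes "digraph V A"
    and "connected_digraph V A"
    and "locally_semicomplete V A"
    and "\<forall>Z. maximal_weak_hub V A Z \<longrightarrow> \<not> mixed V A Z"
    and "maximal_weak_hub V A X" and "maximal_weak_hub V A Y" and "X \<noteq> Y"
  shows "(let P1 = (\<forall>x\<in>X. \<forall>y\<in>Y. (x, y) \<notin> A \<and> (y, x) \<notin> A);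
              P2 = (\<forall>x\<in>X. \<forall>y\<in>Y. (x, y) \<in> A \<and> (y, x) \<notin> A);
              P3 = (\<forall>x\<in>X. \<forall>y\<in>Y. (y, x) \<in> A \<and> (x, y) \<notin> A)
          in (P1 \<and> \<not> P2 \<and> \<not> P3) \<or> (\<not> P1 \<and> P2 \<and> \<not> P3) \<or> (\<not> P1 \<and> \<not> P2 \<and> P3))"
proof -
  have AV: "A \<subseteq> V \<times> V" using assms(1) unfolding digraph_def by blast
  have hubs: "weak_hub V A X" "weak_hub V A Y"
    using assms(5,6) unfolding maximal_weak_hub_def by auto
  then have sc: "strongly_connected_on A X" "strongly_connected_on A Y"
    unfolding weak_hub_def by auto
  have nm: "\<not> mixed V A X" "\<not> mixed V A Y" using assms(4-6) by auto
  have "\<not> (X \<subseteq> Y \<or> Y \<subseteq> X)"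
    using assms(5-7) hubs unfolding maximal_weak_hub_def by blast
  then have "X \<inter> Y = {}"
    using nonmixed_overlapping_nested[OF AV assms(3) sc(1) nm(1) sc(2) nm(2)
        weak_hub_semicomplete[OF hubs(2) assms(3)]] by blast
  then have "(\<forall>x\<in>X. \<forall>y\<in>Y. (x, y) \<notin> A \<and> (y, x) \<notin> A) \<or> dominates A X Y \<or> dominates A Y X"
    using disjoint_nonmixed_trichotomy[OF AV assms(3) sc(1) nm(1) sc(2) nm(2)] by blast
  moreover have "X \<noteq> {}" "Y \<noteq> {}" using sc unfolding strongly_connected_on_def by auto
  ultimately show ?thesis unfolding Let_def dominates_def by blast
qed

end
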